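(* Let $Z$ be a bounded metric space with at least two points and finite capacity dimension $n=\operatorname{cdim}Z$. Then there is $r_0>0$ such that for every $r\in(0,r_0)$ there exists a sequence $(\mathcal U_j)_{j\ge0}$ of $(n+1)$-colored (by a set $C$, $|C|=n+1$) open coverings $\mathcal U_j=\bigcup_{c\in C}\mathcal U_j^c$ of $Z$ such that, for any hyperbolic approximation $X$ of $Z$ with parameter $r$, the following hold: (1) $\mathcal U_0^c=\{Z\}$ for all $c\in C$, and $\operatorname{mesh}\mathcal U_j<r^j$ for every $j\ge1$; (2) for every $v\in V_{j+1}$, $j\ge0$, there is $U\in\mathcal U_j$ with $B(v)\subset U$; (3) (separation) for every $c\in C$ and different members $U\in\mathcal U_j^c$, $U'\in\mathcal U_{j'}^c$ with $j'\le j$: setting $B(U)=\bigcup\{B(v):v\in V_{j+1},\ B(v)\cap U\neq\emptyset\}$, either $B(U)\subset U'$ or $B(U)\cap U'=\emptyset$.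
   Context: For a family $\mathcal U$ of subsets of a metric space $Z$, $\operatorname{mesh}\mathcal U=\sup_{U\in\mathcal U}\operatorname{diam}U$. An open covering $\mathcal U$ is $m$-colored if $\mathcal U=\bigcup_{c\in C}\mathcal U^c$ with $|C|=m$ and each $\mathcal U^c$ consists of pairwise disjoint sets. For an open covering, $L(\mathcal U,z)=\min\{\sup_{U\in\mathcal U}\operatorname{dist}(z,Z\setminus U),\operatorname{mesh}\mathcal U\}$, $L(\mathcal U)=\inf_zL(\mathcal U,z)$. The capacity dimension $\operatorname{cdim}Z$ is the minimal integer $m\ge0$ such that there is $\delta>0$ so that for every sufficiently small $\tau>0$ there exists an $(m+1)$-colored open covering $\mathcal U$ of $Z$ with $\operatorname{mesh}\mathcal U\le\tau$ and $L(\mathcal U)\ge\delta\tau$. Hyperbolic approximation with parameter $r\in(0,1/6]$: let $k_0$ be the largest integer with $\operatorname{diam}Z<r^{k_0}$; for each integer $k\ge k_0$ choose a maximal $r^k$-separated subset $V_k\subset Z$; the vertex set is $V=\bigsqcup_{k\ge k_0}V_k$, and to $v\in V_k$ is associated the open ball $B(v)=\{z\in Z:d(z,v)<2r^k\}$. (Edges: equal-level vertices with intersecting closed balls, or vertices on adjacent levels with the higher-level ball contained in the lower-level ball; unit edge lengths.) *)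

theory Defs
  imports "HOL-Analysis.Analysis"
begin

text \<open>The metric space Z is the whole carrier of a type of class metric_space
  (Z = UNIV). diam is the library's diameter (Z is bounded, so all subsets are).\<close>

definition mesh :: "'a::metric_space set set \<Rightarrow> real" where
  "mesh \<U> = (SUP U\<in>\<U>. diameter U)"

definition cover_of :: "'c set \<Rightarrow> ('c \<Rightarrow> 'a set set) \<Rightarrow> 'a set set" where
  "cover_of C F = (\<Union>c\<in>C. F c)"

definition colored_open_cover :: "'c set \<Rightarrow> ('c \<Rightarrow> 'a::metric_space set set) \<Rightarrow> bool" where
  "colored_open_cover C F \<longleftrightarrow> finite C \<and> (\<forall>U\<in>cover_of C F. open U)
     \<and> \<Union>(cover_of C F) = UNIV \<and> (\<forall>c\<in>C. pairwise disjnt (F c))"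

definition dist_to_compl :: "'a::metric_space \<Rightarrow> 'a set \<Rightarrow> ereal" where
  "dist_to_compl z U = (if - U = {} then \<infinity> else ereal (infdist z (- U)))"

definition lebesgue_at :: "'a::metric_space set set \<Rightarrow> 'a \<Rightarrow> ereal" where
  "lebesgue_at \<U> z = min (SUP U\<in>\<U>. dist_to_compl z U) (ereal (mesh \<U>))"

definition lebesgue :: "'a::metric_space set set \<Rightarrow> ereal" where
  "lebesgue \<U> = (INF z. lebesgue_at \<U> z)"

definition cdim_witness :: "'a::metric_space itself \<Rightarrow> nat \<Rightarrow> bool" where
  "cdim_witness T m \<longleftrightarrow> (\<exists>\<delta>>0. \<exists>\<tau>0>0. \<forall>\<tau>. 0 < \<tau> \<and> \<tau> < \<tau>0 \<longrightarrow>
     (\<exists>(C::nat set) (F::nat \<Rightarrow> 'a set set). card C = m + 1 \<and> colored_open_cover C F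
        \<and> mesh (cover_of C F) \<le> \<tau> \<and> lebesgue (cover_of C F) \<ge> ereal (\<delta> * \<tau>)))"

definition cdim :: "'a::metric_space itself \<Rightarrow> nat" where
  "cdim T = (LEAST m. cdim_witness T m)"

text \<open>Hyperbolic approximation (vertex data). V k is the set of level-k vertices.\<close>
definition separated :: "real \<Rightarrow> 'a::metric_space set \<Rightarrow> bool" where
  "separated \<epsilon> S \<longleftrightarrow> (\<forall>x\<in>S. \<forall>y\<in>S. x \<noteq> y \<longrightarrow> dist x y \<ge> \<epsilon>)"

definition max_separated :: "real \<Rightarrow> 'a::metric_space set \<Rightarrow> bool" where
  "max_separated \<epsilon> S \<longleftrightarrow> separated \<epsilon> S \<and> (\<forall>T. S \<subseteq> T \<and> separated \<epsilon> T \<longrightarrow> T = S)"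

definition hyp_k0 :: "real \<Rightarrow> 'a::metric_space itself \<Rightarrow> int" where
  "hyp_k0 r T = (GREATEST k::int. diameter (UNIV::'a set) < r powi k)"

definition hyp_approx :: "real \<Rightarrow> (int \<Rightarrow> 'a::metric_space set) \<Rightarrow> bool" where
  "hyp_approx r V \<longleftrightarrow> 0 < r \<and> r \<le> 1/6
     \<and> (\<forall>k. k \<ge> hyp_k0 r TYPE('a) \<longrightarrow> max_separated (r powi k) (V k))
     \<and> (\<forall>k. k < hyp_k0 r TYPE('a) \<longrightarrow> V k = {})"

definition hball :: "real \<Rightarrow> int \<Rightarrow> 'a::metric_space \<Rightarrow> 'a set" where
  "hball r k v = ball v (2 * r powi k)"

definition hyp_BU :: "real \<Rightarrow> (int \<Rightarrow> 'a::metric_space set) \<Rightarrow> nat \<Rightarrow> 'a set \<Rightarrow> 'a set" where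
  "hyp_BU r V j U = \<Union>{hball r (int j + 1) v | v. v \<in> V (int j + 1) \<and> hball r (int j + 1) v \<inter> U \<noteq> {}}"

end

(* At each scale r^j, j >= 1, take an (n+1)-coloured cover with mesh r^j/2 and Lebesgue number
   proportional to r^j, and shrink every member W to its core, the points whose (delta/8) r^j-ball
   lies in W; cores of equal colour and level are then (delta/8) r^j apart. The member attached to W
   is the least set that contains the r^(j+1)-neighbourhood of the core and swallows the whole
   4 r^(l+1)-neighbourhood of every finer enlarged member of its colour (of level l) that it meets,
   which gives the separation property by construction. The point is that swallowing does not
   make the sets grow: every point stays within 3 r^(j+1) of the core. Such a point is reached along
   a chain of linked cores of strictly increasing level, so the distances add up to a geometric
   series; when a new member has the level of one already in the chain, the separation of cores
   forces the two to coincide, and the chain is cut there. *)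

theory Submission
  imports Defs
begin

lemma diameter_le_dist:
  fixes S :: "'a::metric_space set"
  assumes "\<And>x y. x \<in> S \<Longrightarrow> y \<in> S \<Longrightarrow> dist x y \<le> d" and "0 \<le> d"
  shows "diameter S \<le> d"
  using assms by (auto simp: diameter_def intro!: cSUP_least)

lemma dist_le_mesh:
  fixes \<U> :: "'a::metric_space set set"
  assumes "bounded (UNIV :: 'a set)" "U \<in> \<U>" "x \<in> U" "y \<in> U"
  shows "dist x y \<le> mesh \<U>"
proof -
  have "dist x y \<le> diameter U"
    using assms by (intro diameter_bounded_bound) (auto intro: bounded_subset)
  also have "\<dots> \<le> mesh \<U>"
    unfolding mesh_def using assms(1,2)
    by (intro cSUP_upper bdd_aboveI[of _ "diameter (UNIV :: 'a set)"]) (auto intro: diameter_subset)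
  finally show ?thesis .
qed

lemma mesh_le:
  assumes "\<U> \<noteq> {}" and "\<And>U. U \<in> \<U> \<Longrightarrow> diameter U \<le> d"
  shows "mesh \<U> \<le> d"
  unfolding mesh_def using assms by (rule cSUP_least)

lemma ball_subset_if_less_dist_to_compl:
  assumes "ereal \<epsilon> < dist_to_compl z U"
  shows "ball z \<epsilon> \<subseteq> U"
proof
  fix y assume "y \<in> ball z \<epsilon>"
  show "y \<in> U"
  proof (rule ccontr)
    assume "y \<notin> U"
    then have "infdist z (- U) \<le> dist z y"
      by (intro infdist_le) simp
    then show False
      using assms \<open>y \<in> ball z \<epsilon>\<close> \<open>y \<notin> U\<close> by (auto simp: dist_to_compl_def split: if_splits)
  qed
qed

lemma lebesgue_ball_subset:
  assumes "ereal \<epsilon> < lebesgue \<U>"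
  shows "\<exists>U\<in>\<U>. ball z \<epsilon> \<subseteq> U"
proof -
  have "lebesgue \<U> \<le> lebesgue_at \<U> z"
    unfolding lebesgue_def by (rule INF_lower) simp
  also have "\<dots> \<le> (SUP U\<in>\<U>. dist_to_compl z U)"
    unfolding lebesgue_at_def by (rule min.cobounded1)
  finally have "ereal \<epsilon> < (SUP U\<in>\<U>. dist_to_compl z U)"
    using assms by (rule order.strict_trans2[rotated])
  then obtain U where "U \<in> \<U>" "ereal \<epsilon> < dist_to_compl z U"
    by (auto simp: less_SUP_iff)
  then show ?thesis
    using ball_subset_if_less_dist_to_compl by blast
qed

lemma cover_of_comp: "cover_of D (F \<circ> h) = cover_of (h ` D) F"
  by (auto simp: cover_of_def)

lemma colored_open_cover_comp:
  "finite D \<Longrightarrow> colored_open_cover (h ` D) F \<Longrightarrow> colored_open_cover D (F \<circ> h)"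
  by (simp add: colored_open_cover_def cover_of_comp)

lemma cdim_witness_cdim: "\<exists>m. cdim_witness T m \<Longrightarrow> cdim_witness T (cdim T)"
  unfolding cdim_def by (rule LeastI_ex)

definition capacity_cover :: "nat \<Rightarrow> real \<Rightarrow> real \<Rightarrow> (nat \<Rightarrow> 'a::metric_space set set) \<Rightarrow> bool" where
  "capacity_cover n \<delta> \<tau> F \<longleftrightarrow> colored_open_cover {..n} F \<and> mesh (cover_of {..n} F) \<le> \<tau>
     \<and> ereal (\<delta> * \<tau>) \<le> lebesgue (cover_of {..n} F)"

lemma cdim_witness_capacity_covers:
  assumes "cdim_witness TYPE('a::metric_space) n"
  shows "\<exists>\<delta>>0. \<exists>\<tau>0>0. \<forall>\<tau>. 0 < \<tau> \<and> \<tau> < \<tau>0 \<longrightarrow> (\<exists>F :: nat \<Rightarrow> 'a set set. capacity_cover n \<delta> \<tau> F)"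
proof -
  obtain \<delta> \<tau>0 where "\<delta> > 0" "\<tau>0 > 0" and covers: "\<And>\<tau>. 0 < \<tau> \<Longrightarrow> \<tau> < \<tau>0 \<Longrightarrow>
     \<exists>(C::nat set) (F::nat \<Rightarrow> 'a set set). card C = n + 1 \<and> colored_open_cover C F
        \<and> mesh (cover_of C F) \<le> \<tau> \<and> ereal (\<delta> * \<tau>) \<le> lebesgue (cover_of C F)"
    using assms unfolding cdim_witness_def by blast
  have "\<exists>F :: nat \<Rightarrow> 'a set set. capacity_cover n \<delta> \<tau> F" if \<tau>: "0 < \<tau>" "\<tau> < \<tau>0" for \<tau>
  proof -
    obtain C and F :: "nat \<Rightarrow> 'a set set" where "card C = n + 1" "colored_open_cover C F"
      "mesh (cover_of C F) \<le> \<tau>" "ereal (\<delta> * \<tau>) \<le> lebesgue (cover_of C F)"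
      using covers[OF \<tau>] by blast
    moreover have "finite C"
      using \<open>card C = n + 1\<close> by (intro card_ge_0_finite) simp
    then obtain h where "bij_betw h {..n} C"
      using finite_same_card_bij[of "{..n}" C] \<open>card C = n + 1\<close> by auto
    ultimately show ?thesis
      unfolding capacity_cover_def
      by (intro exI[of _ "F \<circ> h"])
        (auto simp: cover_of_comp bij_betw_def intro: colored_open_cover_comp)
  qed
  then show ?thesis
    using \<open>\<delta> > 0\<close> \<open>\<tau>0 > 0\<close> by blast
qed

lemma hball_eq_ball: "hball r (int j + 1) v = ball v (2 * r ^ (j + 1))"
proof -
  have "int j + 1 = int (j + 1)"
    by simp
  then show ?thesis
    unfolding hball_def by (simp only: power_int_of_nat)
qed

lemma hyp_BU_near:
  assumes "x \<in> hyp_BU r V j U"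
  shows "\<exists>u\<in>U. dist x u < 4 * r ^ (j + 1)"
proof -
  obtain v u where "x \<in> ball v (2 * r ^ (j + 1))" "u \<in> U" "u \<in> ball v (2 * r ^ (j + 1))"
    using assms unfolding hyp_BU_def hball_eq_ball by blast
  moreover have "dist x u \<le> dist v x + dist v u"
    by (rule dist_triangle3)
  ultimately show ?thesis
    by (intro bexI[of _ u]) auto
qed

locale core_system =
  fixes r g :: real and P :: "'p set" and level :: "'p \<Rightarrow> nat" and colour :: "'p \<Rightarrow> 'c"
    and core :: "'p \<Rightarrow> 'a::metric_space set"
  assumes r_pos: "0 < r" and r_le: "r \<le> 1/18" and gap_ge: "16 * r \<le> g"
    and core_gap: "\<And>p q a b. p \<in> P \<Longrightarrow> q \<in> P \<Longrightarrow> p \<noteq> q \<Longrightarrow> level p = level q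
      \<Longrightarrow> colour p = colour q \<Longrightarrow> a \<in> core p \<Longrightarrow> b \<in> core q \<Longrightarrow> g * r ^ level p \<le> dist a b"
    and core_dist_le: "\<And>p a b. p \<in> P \<Longrightarrow> a \<in> core p \<Longrightarrow> b \<in> core p \<Longrightarrow> dist a b \<le> r ^ level p / 2"
begin

lemma power_r_antimono: "m \<le> n \<Longrightarrow> r ^ n \<le> r ^ m"
  using r_pos r_le by (intro power_decreasing) auto

lemma power_r_Suc_le: "c * r \<le> 1 \<Longrightarrow> c * r ^ Suc m \<le> r ^ m"
  using r_pos mult_right_mono[of "c * r" 1 "r ^ m"] by (simp add: mult.assoc)

inductive enlarged :: "'p \<Rightarrow> 'a \<Rightarrow> bool" where
  core: "k \<in> core p \<Longrightarrow> dist x k < r ^ (level p + 1) \<Longrightarrow> enlarged p x"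
| absorb: "q \<in> P \<Longrightarrow> colour q = colour p \<Longrightarrow> level p < level q \<Longrightarrow> enlarged p y
    \<Longrightarrow> enlarged q u \<Longrightarrow> dist y u < 4 * r ^ (level q + 1)
    \<Longrightarrow> enlarged q u' \<Longrightarrow> dist x u' < 4 * r ^ (level q + 1) \<Longrightarrow> enlarged p x"

definition near :: "'a \<Rightarrow> 'p \<Rightarrow> real \<Rightarrow> bool" where
  "near x p \<epsilon> \<longleftrightarrow> (\<exists>k\<in>core p. dist x k < \<epsilon>)"

lemma near_mono: "near x p \<epsilon> \<Longrightarrow> \<epsilon> \<le> \<epsilon>' \<Longrightarrow> near x p \<epsilon>'"
  unfolding near_def by force

lemma near_triangle: "near u p \<epsilon> \<Longrightarrow> dist x u < \<eta> \<Longrightarrow> near x p (\<epsilon> + \<eta>)"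
  unfolding near_def by (metis add.commute add_strict_mono dist_triangle order_le_less_trans)

definition linked :: "real \<Rightarrow> 'p \<Rightarrow> 'p \<Rightarrow> bool" where
  "linked \<epsilon> p q \<longleftrightarrow> q \<in> P \<and> colour q = colour p \<and> level p < level q
     \<and> (\<exists>a\<in>core p. \<exists>b\<in>core q. dist a b < \<epsilon> + r ^ level q)"

inductive chain_reach :: "real \<Rightarrow> 'p \<Rightarrow> 'a \<Rightarrow> bool" where
  near: "near x p \<epsilon> \<Longrightarrow> chain_reach \<epsilon> p x"
| link: "linked \<epsilon> p q \<Longrightarrow> chain_reach (7 * r ^ (level q + 1)) q x \<Longrightarrow> chain_reach \<epsilon> p x"

lemma near_through_link:
  assumes "linked \<epsilon> p q" and "near x q (9 * r ^ (level q + 1))"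
  shows "near x p (\<epsilon> + 2 * r ^ level q)"
proof -
  obtain a b where ab: "q \<in> P" "a \<in> core p" "b \<in> core q" "dist a b < \<epsilon> + r ^ level q"
    using assms(1) unfolding linked_def by blast
  obtain b' where b': "b' \<in> core q" "dist x b' < 9 * r ^ (level q + 1)"
    using assms(2) unfolding near_def by blast
  have "dist x a \<le> dist x b' + dist b' b + dist b a"
    using dist_triangle[of x a b'] dist_triangle[of b' a b] by linarith
  also have "\<dots> < 9 * r ^ (level q + 1) + r ^ level q / 2 + (\<epsilon> + r ^ level q)"
    using ab b' core_dist_le[OF ab(1) b'(1) ab(3)] by (simp add: dist_commute)
  also have "\<dots> \<le> \<epsilon> + 2 * r ^ level q"
    using power_r_Suc_le[of 18 "level q"] r_le by simp
  finally show ?thesis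
    using ab(2) unfolding near_def by blast
qed

lemma chain_reach_near: "chain_reach \<epsilon> p x \<Longrightarrow> near x p (\<epsilon> + 2 * r ^ (level p + 1))"
proof (induction rule: chain_reach.induct)
  case (near x p \<epsilon>)
  then show ?case
    using r_pos by (auto intro: near_mono)
next
  case (link \<epsilon> p q x)
  have "near x p (\<epsilon> + 2 * r ^ level q)"
    using near_through_link[OF link.hyps(1)] link.IH by simp
  moreover have "r ^ level q \<le> r ^ (level p + 1)"
    using link.hyps(1) by (intro power_r_antimono) (simp add: linked_def)
  ultimately show ?case
    by (auto elim: near_mono)
qed

lemma linked_if_near_common:
  assumes "q \<in> P" "colour q = colour p" "level p < level q"
    and "near x p (\<epsilon> + 2 * r ^ (level q + 1))" "near x q (7 * r ^ (level q + 1))"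
  shows "linked \<epsilon> p q"
proof -
  obtain a b where "a \<in> core p" "dist x a < \<epsilon> + 2 * r ^ (level q + 1)"
    "b \<in> core q" "dist x b < 7 * r ^ (level q + 1)"
    using assms(4,5) unfolding near_def by blast
  moreover have "dist a b \<le> dist x a + dist x b"
    by (rule dist_triangle3)
  moreover have "9 * r ^ (level q + 1) \<le> r ^ level q"
    using power_r_Suc_le[of 9 "level q"] r_le by simp
  ultimately show ?thesis
    using assms(1-3) unfolding linked_def by force
qed

lemma chain_reach_extend:
  assumes "chain_reach \<epsilon> p y" "q \<in> P" "colour q = colour p" "level p < level q"
    and "near y q (7 * r ^ (level q + 1))" "near x q (7 * r ^ (level q + 1))"
  shows "chain_reach \<epsilon> p x"
  using assms
proof (induction rule: chain_reach.induct)
  case (near y p \<epsilon>)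
  then have "near y p (\<epsilon> + 2 * r ^ (level q + 1))"
    using r_pos by (auto intro: near_mono[OF near.hyps])
  then have "linked \<epsilon> p q"
    using near.prems by (intro linked_if_near_common)
  then show ?case
    using near.prems(5) by (blast intro: chain_reach.link[OF _ chain_reach.near])
next
  case (link \<epsilon> p s y)
  have s: "s \<in> P" "colour s = colour q" "level p < level s"
    using link.hyps(1) link.prems(2) unfolding linked_def by auto
  consider "level s < level q" | "level s = level q" | "level q < level s"
    by linarith
  then show ?case
  proof cases
    case 1
    then show ?thesis
      using chain_reach.link[OF link.hyps(1) link.IH] link.prems s by simp
  next
    case 2
    obtain a b where "a \<in> core s" "dist y a < 9 * r ^ (level s + 1)"
      "b \<in> core q" "dist y b < 7 * r ^ (level q + 1)"
      using chain_reach_near[OF link.hyps(2)] link.prems(4) unfolding near_def by auto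
    moreover have "dist a b \<le> dist y a + dist y b"
      by (rule dist_triangle3)
    moreover have "16 * r ^ (level s + 1) \<le> g * r ^ level s"
      using gap_ge r_pos by (simp add: mult_right_mono mult.assoc[symmetric])
    ultimately have "s = q"
      using core_gap[OF s(1) link.prems(1) _ 2 s(2)] 2 by force
    then show ?thesis
      using link.hyps(1) link.prems(5) by (blast intro: chain_reach.link[OF _ chain_reach.near])
  next
    case 3
    have "near y p (\<epsilon> + 2 * r ^ level s)"
      using near_through_link[OF link.hyps(1)] chain_reach_near[OF link.hyps(2)] by simp
    moreover have "r ^ level s \<le> r ^ (level q + 1)"
      using 3 by (intro power_r_antimono) simp
    ultimately have "near y p (\<epsilon> + 2 * r ^ (level q + 1))"
      by (auto elim!: near_mono)
    then have "linked \<epsilon> p q"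
      using link.prems by (intro linked_if_near_common)
    then show ?thesis
      using link.prems(5) by (blast intro: chain_reach.link[OF _ chain_reach.near])
  qed
qed

lemma enlarged_chain_reach: "enlarged p x \<Longrightarrow> chain_reach (r ^ (level p + 1)) p x"
proof (induction rule: enlarged.induct)
  case (core k p x)
  then show ?case
    by (intro chain_reach.near) (auto simp: near_def)
next
  case (absorb q p y u u' x)
  have "near u q (3 * r ^ (level q + 1))" "near u' q (3 * r ^ (level q + 1))"
    using chain_reach_near[OF absorb.IH(2)] chain_reach_near[OF absorb.IH(3)] by simp_all
  then have "near y q (7 * r ^ (level q + 1))" "near x q (7 * r ^ (level q + 1))"
    using near_triangle[of u q _ y] near_triangle[of u' q _ x] absorb.hyps(6,8) by fastforce+
  then show ?case
    using chain_reach_extend[OF absorb.IH(1) absorb.hyps(1-3)] by blast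
qed

lemma enlarged_near_core: "enlarged p x \<Longrightarrow> near x p (3 * r ^ (level p + 1))"
  using chain_reach_near[OF enlarged_chain_reach] by simp

lemma enlarged_in_ball:
  assumes "enlarged p x"
  shows "\<exists>c \<epsilon>. x \<in> ball c \<epsilon> \<and> ball c \<epsilon> \<subseteq> Collect (enlarged p)"
  using assms
proof (cases rule: enlarged.cases)
  case (core k)
  then show ?thesis
    by (intro exI[of _ k] exI[of _ "r ^ (level p + 1)"])
      (auto simp: dist_commute intro: enlarged.core)
next
  case (absorb q y u u')
  then show ?thesis
    by (intro exI[of _ u'] exI[of _ "4 * r ^ (level q + 1)"])
      (auto simp: dist_commute intro: enlarged.absorb[OF absorb(1-6)])
qed

lemma open_enlarged: "open (Collect (enlarged p))"
  unfolding open_subopen[of "Collect (enlarged p)"] using enlarged_in_ball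
  by (metis mem_Collect_eq open_ball)

lemma enlarged_separated:
  assumes "p \<in> P" "q \<in> P" "p \<noteq> q" "level p = level q" "colour p = colour q"
    and "enlarged p x" "enlarged q y"
  shows "4 * r ^ (level p + 1) \<le> dist x y"
proof (rule ccontr)
  assume close: "\<not> 4 * r ^ (level p + 1) \<le> dist x y"
  obtain a b where "a \<in> core p" "dist x a < 3 * r ^ (level p + 1)"
    "b \<in> core q" "dist y b < 3 * r ^ (level p + 1)"
    using enlarged_near_core assms(4,6,7) unfolding near_def by metis
  moreover have "dist a b \<le> dist x a + dist x y + dist y b"
    using dist_triangle[of a b y] dist_triangle[of a y x] by (simp add: dist_commute)
  moreover have "10 * r ^ (level p + 1) \<le> g * r ^ level p"
    using gap_ge r_pos by (simp add: mult_right_mono mult.assoc[symmetric])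
  ultimately show False
    using core_gap[OF assms(1-5)] close by force
qed

lemma disjnt_enlarged:
  assumes "p \<in> P" "q \<in> P" "p \<noteq> q" "level p = level q" "colour p = colour q"
  shows "disjnt (Collect (enlarged p)) (Collect (enlarged q))"
proof -
  have "0 < 4 * r ^ (level p + 1)"
    using r_pos by simp
  then have "\<not> (enlarged p x \<and> enlarged q x)" for x
    using enlarged_separated[OF assms, of x x] by auto
  then show ?thesis
    by (auto simp: disjnt_def)
qed

lemma dist_enlarged_le:
  assumes "p \<in> P" "enlarged p x" "enlarged p y"
  shows "dist x y \<le> r ^ level p / 2 + 6 * r ^ (level p + 1)"
proof -
  obtain a b where "a \<in> core p" "dist x a < 3 * r ^ (level p + 1)"
    "b \<in> core p" "dist y b < 3 * r ^ (level p + 1)"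
    using enlarged_near_core assms(2,3) unfolding near_def by metis
  moreover have "dist x y \<le> dist x a + dist a b + dist y b"
    using dist_triangle[of x y a] dist_triangle[of a y b] by (simp add: dist_commute)
  ultimately show ?thesis
    using core_dist_le[OF assms(1)] by fastforce
qed

end

locale scaled_cover_sequence =
  fixes r \<delta> :: real and n :: nat and F :: "nat \<Rightarrow> nat \<Rightarrow> 'a::metric_space set set"
  assumes bounded_space: "bounded (UNIV :: 'a set)"
    and r_pos: "0 < r" and r_le: "r \<le> 1/18" and r_le_\<delta>: "128 * r \<le> \<delta>"
    and cover: "\<And>j. 1 \<le> j \<Longrightarrow> colored_open_cover {..n} (F j)"
    and mesh_cover_le: "\<And>j. 1 \<le> j \<Longrightarrow> mesh (cover_of {..n} (F j)) \<le> r ^ j / 2"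
    and lebesgue_cover_ge: "\<And>j. 1 \<le> j \<Longrightarrow> ereal (\<delta> * (r ^ j / 2)) \<le> lebesgue (cover_of {..n} (F j))"
begin

definition pieces :: "(nat \<times> nat \<times> 'a set) set" where
  "pieces = {(j, c, W). 1 \<le> j \<and> c \<le> n \<and> W \<in> F j c}"

definition core :: "nat \<times> nat \<times> 'a set \<Rightarrow> 'a set" where
  "core = (\<lambda>(j, c, W). {z. ball z (\<delta> / 8 * r ^ j) \<subseteq> W})"

lemma core_subset: "core (j, c, W) \<subseteq> W"
  using r_pos r_le_\<delta> by (auto simp: core_def)

sublocale core_system r "\<delta> / 8" pieces fst "\<lambda>p. fst (snd p)" core
proof
  show "0 < r" "r \<le> 1/18" "16 * r \<le> \<delta> / 8"
    using r_pos r_le r_le_\<delta> by simp_all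
next
  fix p q :: "nat \<times> nat \<times> 'a set" and a b
  assume "p \<in> pieces" "q \<in> pieces" "p \<noteq> q" "fst p = fst q" "fst (snd p) = fst (snd q)"
    and "a \<in> core p" "b \<in> core q"
  then obtain j c W W' where pq: "p = (j, c, W)" "q = (j, c, W')" "W \<noteq> W'" "1 \<le> j" "c \<le> n"
    "W \<in> F j c" "W' \<in> F j c" "ball a (\<delta> / 8 * r ^ j) \<subseteq> W"
    by (cases p, cases q) (auto simp: pieces_def core_def)
  have "disjnt W W'"
    using cover[OF pq(4)] pq(3,5-7) unfolding colored_open_cover_def pairwise_def by blast
  moreover have "b \<in> W'"
    using \<open>b \<in> core q\<close> core_subset pq(2) by blast
  ultimately have "b \<notin> ball a (\<delta> / 8 * r ^ j)"
    using pq(8) by (auto simp: disjnt_def)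
  then show "\<delta> / 8 * r ^ fst p \<le> dist a b"
    using pq(1) by simp
next
  fix p :: "nat \<times> nat \<times> 'a set" and a b
  assume "p \<in> pieces" "a \<in> core p" "b \<in> core p"
  then obtain j c W where p: "p = (j, c, W)" "1 \<le> j" "c \<le> n" "W \<in> F j c" "a \<in> W" "b \<in> W"
    using core_subset by (cases p) (auto simp: pieces_def)
  then have "dist a b \<le> mesh (cover_of {..n} (F j))"
    using bounded_space by (intro dist_le_mesh) (auto simp: cover_of_def)
  then show "dist a b \<le> r ^ fst p / 2"
    using mesh_cover_le[OF p(2)] p(1) by simp
qed

definition layer :: "nat \<Rightarrow> nat \<Rightarrow> 'a set set" where
  "layer j c = (if j = 0 then {UNIV} else (\<lambda>W. Collect (enlarged (j, c, W))) ` F j c)"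

lemma ball_subset_enlarged:
  assumes "1 \<le> j"
  shows "\<exists>c W. c \<le> n \<and> W \<in> F j c \<and> ball z (2 * r ^ (j + 1)) \<subseteq> Collect (enlarged (j, c, W))"
proof -
  have "ereal (\<delta> / 4 * r ^ j) < ereal (\<delta> * (r ^ j / 2))"
    using r_pos r_le_\<delta> by simp
  then have "ereal (\<delta> / 4 * r ^ j) < lebesgue (cover_of {..n} (F j))"
    using lebesgue_cover_ge[OF assms] by (rule order.strict_trans2)
  then obtain c W where cW: "c \<le> n" "W \<in> F j c" "ball z (\<delta> / 4 * r ^ j) \<subseteq> W"
    using lebesgue_ball_subset by (fastforce simp: cover_of_def)
  have "y \<in> core (j, c, W)" if "dist z y < 2 * r ^ (j + 1)" for y
  proof -
    have "(2 * r + \<delta> / 8) * r ^ j \<le> \<delta> / 4 * r ^ j"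
      using r_le_\<delta> r_pos by (intro mult_right_mono) simp_all
    then have radii: "2 * r ^ (j + 1) + \<delta> / 8 * r ^ j \<le> \<delta> / 4 * r ^ j"
      by (simp add: algebra_simps)
    have "ball y (\<delta> / 8 * r ^ j) \<subseteq> ball z (\<delta> / 4 * r ^ j)"
    proof
      fix w assume "w \<in> ball y (\<delta> / 8 * r ^ j)"
      then show "w \<in> ball z (\<delta> / 4 * r ^ j)"
        using that radii dist_triangle[of z w y] by simp
    qed
    then show ?thesis
      using cW(3) by (simp add: core_def)
  qed
  then have "ball z (2 * r ^ (j + 1)) \<subseteq> Collect (enlarged (j, c, W))"
    using r_pos enlarged.core[of _ "(j, c, W)"] by fastforce
  then show ?thesis
    using cW by blast
qed

lemma colored_open_cover_layer: "colored_open_cover {..n} (layer j)"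
proof (cases "j = 0")
  case True
  then show ?thesis
    by (auto simp: colored_open_cover_def cover_of_def layer_def pairwise_def)
next
  case False
  then have layer: "layer j c = (\<lambda>W. Collect (enlarged (j, c, W))) ` F j c" for c
    by (simp add: layer_def)
  have "z \<in> \<Union>(cover_of {..n} (layer j))" for z
  proof -
    obtain c W where cW: "c \<le> n" "W \<in> F j c"
      "ball z (2 * r ^ (j + 1)) \<subseteq> Collect (enlarged (j, c, W))"
      using ball_subset_enlarged[of j z] False by auto
    have "z \<in> Collect (enlarged (j, c, W))"
      by (rule subsetD[OF cW(3)]) (use r_pos in simp)
    then show ?thesis
      using cW(1,2) by (auto simp: cover_of_def layer)
  qed
  moreover have "pairwise disjnt (layer j c)" if "c \<le> n" for c
    unfolding layer
  proof (rule pairwise_imageI)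
    fix W W' assume "W \<in> F j c" "W' \<in> F j c"
      "Collect (enlarged (j, c, W)) \<noteq> Collect (enlarged (j, c, W'))"
    then show "disjnt (Collect (enlarged (j, c, W))) (Collect (enlarged (j, c, W')))"
      using False that by (intro disjnt_enlarged) (auto simp: pieces_def)
  qed
  moreover have "open U" if "U \<in> cover_of {..n} (layer j)" for U
    using that open_enlarged by (auto simp: cover_of_def layer)
  ultimately show ?thesis
    unfolding colored_open_cover_def by blast
qed

lemma mesh_layer_less:
  assumes "1 \<le> j"
  shows "mesh (cover_of {..n} (layer j)) < r ^ j"
proof -
  have "mesh (cover_of {..n} (layer j)) \<le> r ^ j / 2 + 6 * r ^ (j + 1)"
  proof (rule mesh_le)
    show "cover_of {..n} (layer j) \<noteq> {}"
      using ball_subset_enlarged[OF assms] assms by (fastforce simp: cover_of_def layer_def)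
  next
    fix U assume "U \<in> cover_of {..n} (layer j)"
    then obtain c W where "c \<le> n" "W \<in> F j c" "U = Collect (enlarged (j, c, W))"
      using assms by (auto simp: cover_of_def layer_def)
    then show "diameter U \<le> r ^ j / 2 + 6 * r ^ (j + 1)"
      using assms r_pos dist_enlarged_le[of "(j, c, W)"]
      by (intro diameter_le_dist) (auto simp: pieces_def)
  qed
  also have "\<dots> < r ^ j"
  proof -
    have "18 * r ^ (j + 1) \<le> r ^ j"
      using power_r_Suc_le[of 18 j] r_le by simp
    moreover have "0 < r ^ j"
      using r_pos by simp
    ultimately show ?thesis
      by linarith
  qed
  finally show ?thesis .
qed

lemma ball_subset_layer: "\<exists>U\<in>cover_of {..n} (layer j). ball z (2 * r ^ (j + 1)) \<subseteq> U"
  using ball_subset_enlarged[of j z] by (cases "j = 0") (auto simp: cover_of_def layer_def)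

lemma layer_nested_or_disjoint:
  assumes "c \<le> n" "j' \<le> j" "U \<in> layer j c" "U' \<in> layer j' c" "U \<noteq> U'"
    and near_U: "\<And>z. z \<in> S \<Longrightarrow> \<exists>u\<in>U. dist z u < 4 * r ^ (j + 1)"
  shows "S \<subseteq> U' \<or> S \<inter> U' = {}"
proof (cases "j' = 0")
  case True
  then show ?thesis
    using assms(4) by (simp add: layer_def)
next
  case False
  then obtain W W' where W: "W \<in> F j c" "U = Collect (enlarged (j, c, W))"
    and W': "W' \<in> F j' c" "U' = Collect (enlarged (j', c, W'))"
    using assms(2-4) by (auto simp: layer_def)
  have pieces: "(j, c, W) \<in> pieces" "(j', c, W') \<in> pieces"
    using False assms(1,2) W W' by (auto simp: pieces_def)
  show ?thesis
  proof (rule disjCI)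
    assume "S \<inter> U' \<noteq> {}"
    then obtain x u where x: "x \<in> S" "enlarged (j', c, W') x" "enlarged (j, c, W) u"
      "dist x u < 4 * r ^ (j + 1)"
      using near_U W W' by blast
    show "S \<subseteq> U'"
    proof (cases "j' = j")
      case True
      then have "4 * r ^ (j + 1) \<le> dist x u"
        using enlarged_separated[OF pieces(2,1)] x(2,3) W W' assms(5) by auto
      then show ?thesis
        using x(4) by simp
    next
      case False
      show ?thesis
      proof
        fix z assume "z \<in> S"
        then obtain u' where "enlarged (j, c, W) u'" "dist z u' < 4 * r ^ (j + 1)"
          using near_U W by blast
        then show "z \<in> U'"
          using enlarged.absorb[OF pieces(1) _ _ x(2,3)] x(4) False assms(2) W'
          by (simp add: dist_commute)
      qed
    qed
  qed
qed

end

lemma cdim_witness_scaled_cover_sequence: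
  assumes "bounded (UNIV :: 'a::metric_space set)" and "cdim_witness TYPE('a) n"
  shows "\<exists>r0>0. \<forall>r. 0 < r \<and> r < r0 \<longrightarrow>
    (\<exists>\<delta> (F :: nat \<Rightarrow> nat \<Rightarrow> 'a set set). scaled_cover_sequence r \<delta> n F)"
proof -
  obtain \<delta> \<tau>0 where "\<delta> > 0" "\<tau>0 > 0" and covers: "\<And>\<tau>. 0 < \<tau> \<Longrightarrow> \<tau> < \<tau>0 \<Longrightarrow>
      \<exists>F :: nat \<Rightarrow> 'a set set. capacity_cover n \<delta> \<tau> F"
    using cdim_witness_capacity_covers[OF assms(2)] by blast
  have "\<exists>\<delta> (F :: nat \<Rightarrow> nat \<Rightarrow> 'a set set). scaled_cover_sequence r \<delta> n F"
    if r: "0 < r" "r < min (\<delta> / 128) (min (1/18) \<tau>0)" for r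
  proof -
    have "\<forall>j\<in>{1..}. \<exists>F :: nat \<Rightarrow> 'a set set. capacity_cover n \<delta> (r ^ j / 2) F"
    proof
      fix j :: nat
      assume "j \<in> {1..}"
      then have "r ^ j \<le> r"
        using power_decreasing[of 1 j r] r by simp
      then show "\<exists>F :: nat \<Rightarrow> 'a set set. capacity_cover n \<delta> (r ^ j / 2) F"
        using covers[of "r ^ j / 2"] r by simp
    qed
    then obtain F :: "nat \<Rightarrow> nat \<Rightarrow> 'a set set"
      where "\<forall>j\<in>{1..}. capacity_cover n \<delta> (r ^ j / 2) (F j)"
      by (rule bchoice[THEN exE])
    then have "scaled_cover_sequence r \<delta> n F"
      using assms(1) r by unfold_locales (auto simp: capacity_cover_def)
    then show ?thesis
      by blast
  qed
  then show ?thesis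
    using \<open>\<delta> > 0\<close> \<open>\<tau>0 > 0\<close> by (intro exI[of _ "min (\<delta> / 128) (min (1/18) \<tau>0)"]) auto
qed

theorem theorem5p1:
  fixes n :: nat
  assumes "bounded (UNIV::'a::metric_space set)"
    and "\<exists>x y::'a. x \<noteq> y"
    and "\<exists>m. cdim_witness TYPE('a) m"
    and "n = cdim TYPE('a)"
  shows "\<exists>r0>0. \<forall>r. 0 < r \<and> r < r0 \<longrightarrow>
    (\<exists>(C::nat set) (\<U>::nat \<Rightarrow> nat \<Rightarrow> 'a set set).
       card C = n + 1 \<and> (\<forall>j. colored_open_cover C (\<U> j)) \<and>
       (\<forall>V. hyp_approx r V \<longrightarrow>
          (\<forall>c\<in>C. \<U> 0 c = {UNIV}) \<and>
          (\<forall>j\<ge>1. mesh (cover_of C (\<U> j)) < r ^ j) \<and>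
          (\<forall>j. \<forall>v\<in>V (int j + 1). \<exists>U\<in>cover_of C (\<U> j). hball r (int j + 1) v \<subseteq> U) \<and>
          (\<forall>c\<in>C. \<forall>j j'. j' \<le> j \<longrightarrow> (\<forall>U\<in>\<U> j c. \<forall>U'\<in>\<U> j' c. U \<noteq> U' \<longrightarrow>
              hyp_BU r V j U \<subseteq> U' \<or> hyp_BU r V j U \<inter> U' = {}))))"
proof -
  have "cdim_witness TYPE('a) n"
    using cdim_witness_cdim[OF assms(3)] assms(4) by simp
  then obtain r0 where "r0 > 0" and sequence: "\<And>r. 0 < r \<Longrightarrow> r < r0
      \<Longrightarrow> \<exists>\<delta> (F :: nat \<Rightarrow> nat \<Rightarrow> 'a set set). scaled_cover_sequence r \<delta> n F"
    using cdim_witness_scaled_cover_sequence[OF assms(1)] by blast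
  show ?thesis (is "\<exists>r0>0. \<forall>r. 0 < r \<and> r < r0 \<longrightarrow> ?covers r")
  proof (intro exI[of _ r0] conjI allI impI)
    fix r :: real
    assume "0 < r \<and> r < r0"
    with sequence obtain \<delta> and F :: "nat \<Rightarrow> nat \<Rightarrow> 'a set set" where "scaled_cover_sequence r \<delta> n F"
      by blast
    then interpret scaled_cover_sequence r \<delta> n F .
    show "?covers r"
      using colored_open_cover_layer mesh_layer_less ball_subset_layer
        layer_nested_or_disjoint[OF _ _ _ _ _ hyp_BU_near]
      by (intro exI[of _ "{..n}"] exI[of _ layer]) (auto simp: hball_eq_ball layer_def)
  qed (rule \<open>r0 > 0\<close>)
qed

end
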